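(* Let $p$ be an odd prime, $\alpha$ an indeterminate over $\mathbb F_p$, and for $\gamma\in\mathbb F_p(\alpha)$ let \[ G^{(\gamma)}(X)=-\sum_{k=1}^{p-1}\frac{1}{k}\,\frac{X^{k}}{\prod_{s=1}^{k-1}b_{1,s}(\gamma)} \] (empty product equal to $1$). Then for every integer $h$ with $0<h<p$, \[ G^{(h\alpha)}\!\left(\frac{X^h}{\prod_{s=1}^{h-1}b_{1,s}(\alpha)}\right)\equiv h\,G^{(\alpha)}(X)\pmod{X^p-L_{p-1}^{(\alpha^p)}(\alpha^p-\alpha)} \] in the polynomial ring $\mathbb F_p(\alpha)[X]$, where $L_{p-1}^{(\alpha^p)}(\alpha^p-\alpha)$ is obtained from $L_{p-1}^{(\alpha)}(X)$ by substituting $\alpha^p$ for $\alpha$ and $\alpha^p-\alpha$ for $X$.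
   Context: $\mathbb F_p$ is the field of $p$ elements, $\binom{x}{m}=x(x-1)\cdots(x-m+1)/m!$. $L_{p-1}^{(\alpha)}(X)=\sum_{k=0}^{p-1}\binom{\alpha-1}{p-1-k}\frac{(-X)^k}{k!}\in\mathbb F_p[\alpha,X]$. For integers $0<r,s<p$ (interpreted as elements of $\mathbb F_p$), $b_{r,s}(\alpha)=\sum_{k=0}^{p-1}(-r/s)^k\binom{r\alpha-1}{p-1-k}\binom{s\alpha-1}{k}\in\mathbb F_p[\alpha]$, and $b_{1,s}(h\alpha)$ denotes substitution of $h\alpha$ for $\alpha$. *)

theory Defs
  imports "Berlekamp_Zassenhaus.Finite_Field" "HOL-Computational_Algebra.Fraction_Field"
          "HOL-Computational_Algebra.Polynomial"
begin

text \<open>F_p is the type 'p mod_ring (p = CARD('p), a prime), F_p[alpha] is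
 'p mod_ring poly and F_p(alpha) is its fraction field 'p mod_ring poly fract.\<close>

type_synonym 'p ratfun = "'p mod_ring poly fract"

definition alpha :: "'p::prime_card ratfun" where
  "alpha = to_fract [:0, 1:]"

text \<open>Binomial coefficient binom(x, m) = x(x-1)...(x-m+1)/m! in a field
 (used only for m < p, where m! is invertible).\<close>
definition fbinom :: "'a::field \<Rightarrow> nat \<Rightarrow> 'a" where
  "fbinom x m = (\<Prod>i<m. x - of_nat i) / of_nat (fact m)"

text \<open>b_{r,s}(gamma) = sum_{k=0}^{p-1} (-r/s)^k binom(r gamma - 1, p-1-k) binom(s gamma - 1, k),
 evaluated at an element gamma of F_p(alpha) (i.e. the polynomial b_{r,s} with gamma substituted).\<close>
definition b_rs :: "nat \<Rightarrow> nat \<Rightarrow> 'p::prime_card ratfun \<Rightarrow> 'p ratfun" where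
  "b_rs r s \<gamma> = (let p = CARD('p) in
     \<Sum>k\<le>p-1. (- (of_nat r / of_nat s)) ^ k * fbinom (of_nat r * \<gamma> - 1) (p - 1 - k)
                 * fbinom (of_nat s * \<gamma> - 1) k)"

definition laguerre :: "'p::prime_card ratfun \<Rightarrow> 'p ratfun \<Rightarrow> 'p ratfun" where
  "laguerre a x = (let p = CARD('p) in
     \<Sum>k\<le>p-1. fbinom (a - 1) (p - 1 - k) * (- x) ^ k / of_nat (fact k))"

definition G_poly :: "'p::prime_card ratfun \<Rightarrow> 'p ratfun poly" where
  "G_poly \<gamma> = - (\<Sum>k=1..CARD('p)-1.
      monom (1 / (of_nat k * (\<Prod>s=1..k-1. b_rs 1 s \<gamma>))) k)"

end

theory Submission
  imports Defs "HOL-Computational_Algebra.Formal_Power_Series"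
begin

text \<open>Over any field of odd characteristic p both ingredients split into the linear factors
  1 - x / i with 0 < i < p. The polynomial b_{1,s}(x) has degree at most (p - 1) / 2, value 1 at 0,
  and vanishes at the at least (p - 1) / 2 residues i with i + (s i mod p) < p; the polynomial
  L_{p-1}^{(x^p)}(x^p - x) has degree at most p (p - 1) / 2, value 1 at 0, and is divisible by the
  product of the (x - i)^(p - i). Both degree bounds come from three-term recurrences read off
  from first order differential equations of generating functions. Counting exponents then gives
  L^q * prod_{s<r} b_{1,s}(alpha) = prod_{s<k} b_{1,s}(h alpha) * (prod_{s<h} b_{1,s}(alpha))^k
  whenever h k = q p + r. Modulo X^p - L the monomial X^(h k) reduces to L^q X^r, so this identity
  matches the k-th term of the left-hand side with the r-th term of h G^(alpha)(X), and
  k \<mapsto> h k mod p permutes the terms.\<close>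

lemma of_nat_eq_to_fract: "(of_nat n :: 'a::idom fract) = to_fract (of_nat n)"
  by (simp add: of_nat_fract to_fract_def)

lemma CHAR_fract [simp]: "CHAR('a::idom fract) = CHAR('a)"
  by (rule CHAR_eqI) (simp_all add: of_nat_eq_to_fract of_nat_eq_0_iff_char_dvd)

instance fract :: (idom_prime_char) field_prime_char
  by (rule field_prime_charI') simp

lemma of_nat_power_CHAR: "(of_nat n :: 'a::comm_ring_prime_char) ^ CHAR('a) = of_nat n"
proof (induction n)
  case (Suc n)
  have "(of_nat n + 1 :: 'a) ^ CHAR('a) = of_nat n ^ CHAR('a) + 1 ^ CHAR('a)"
    by (rule freshmans_dream) simp_all
  then show ?case
    using Suc by (simp add: add.commute)
qed (simp add: power_0_left)

lemma of_nat_neq_0_below_CHAR: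
  "0 < n \<Longrightarrow> n < CHAR('a) \<Longrightarrow> (of_nat n :: 'a::semiring_1) \<noteq> 0"
  by (auto simp: of_nat_eq_0_iff_char_dvd dest: dvd_imp_le)

lemma inj_on_of_nat_below_CHAR: "inj_on (of_nat :: nat \<Rightarrow> 'a::ring_1) {..<CHAR('a)}"
  by (auto intro!: inj_onI simp: of_nat_eq_iff_cong_CHAR cong_def)

lemma of_nat_fact_neq_0_below_CHAR:
  "n < CHAR('a) \<Longrightarrow> (of_nat (fact n) :: 'a::semiring_prime_char) \<noteq> 0"
  by (simp add: of_nat_eq_0_iff_char_dvd prime_dvd_fact_iff)

lemma of_nat_Suc_div_fact_Suc:
  assumes "Suc m < CHAR('a)"
  shows "(of_nat (Suc m) :: 'a::field_prime_char) / of_nat (fact (Suc m)) = 1 / of_nat (fact m)"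
proof -
  have "(of_nat (Suc m) :: 'a) \<noteq> 0"
    using assms by (intro of_nat_neq_0_below_CHAR) simp_all
  then show ?thesis
    by (simp only: fact_Suc of_nat_mult of_nat_id nonzero_divide_mult_cancel_left not_False_eq_True)
qed

lemma mult_mod_prime_pos:
  fixes p :: nat
  assumes "prime p" "0 < a" "a < p" "0 < b" "b < p"
  shows "0 < (a * b) mod p"
proof -
  have "\<not> p dvd a * b"
    using assms by (auto simp: prime_dvd_mult_iff dest: dvd_imp_le)
  then show ?thesis
    by (simp add: dvd_eq_mod_eq_0)
qed

lemma bij_betw_mult_mod_prime:
  fixes p :: nat
  assumes "prime p" "0 < h" "h < p"
  shows "bij_betw (\<lambda>i. (h * i) mod p) {0<..<p} {0<..<p}"
proof -
  have "coprime h p"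
    using assms by (metis prime_imp_coprime coprime_commute dvd_imp_le not_le)
  then have "inj_on (\<lambda>i. (h * i) mod p) {0<..<p}"
    by (intro inj_onI) (auto simp: cong_def[symmetric] cong_mult_lcancel_nat cong_less_modulus_unique_nat)
  moreover have "(\<lambda>i. (h * i) mod p) ` {0<..<p} \<subseteq> {0<..<p}"
    using assms mult_mod_prime_pos[OF assms(1)] by auto
  ultimately show ?thesis
    by (simp add: bij_betw_def endo_inj_surj)
qed

lemma prod_linear_factors_dvd:
  fixes q :: "'a::idom poly"
  assumes "finite S" "inj_on r S" "\<And>i. i \<in> S \<Longrightarrow> poly q (r i) = 0"
  shows "(\<Prod>i\<in>S. [:- r i, 1:]) dvd q"
  using assms
proof (induction S arbitrary: q rule: finite_induct)
  case (insert a S)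
  have "[:- r a, 1:] dvd q"
    using insert.prems(2) by (simp add: poly_eq_0_iff_dvd)
  then obtain q' where q': "q = [:- r a, 1:] * q'"
    by (elim dvdE)
  have "poly q' (r i) = 0" if "i \<in> S" for i
  proof -
    have "r i \<noteq> r a"
      using insert.prems(1) insert.hyps(2) that by (metis inj_on_contraD insertCI)
    then show ?thesis
      using insert.prems(2)[of i] that q' by simp
  qed
  then have "(\<Prod>i\<in>S. [:- r i, 1:]) dvd q'"
    using insert.IH insert.prems(1) by (simp add: inj_on_insert)
  then show ?case
    unfolding q' prod.insert[OF insert.hyps] by (rule mult_dvd_mono[OF dvd_refl])
qed simp

lemma poly_eq_prod_of_linear_factors_dvd:
  fixes B :: "'a::field poly"
  assumes "finite S" and dvd: "(\<Prod>i\<in>S. [:- r i, 1:] ^ e i) dvd B" and B0: "poly B 0 = 1"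
    and deg: "degree B \<le> (\<Sum>i\<in>S. e i)" and nz: "\<And>i. i \<in> S \<Longrightarrow> r i \<noteq> 0"
  shows "poly B x = (\<Prod>i\<in>S. (1 - x / r i) ^ e i)"
proof -
  define Q where "Q = (\<Prod>i\<in>S. [:- r i, 1:] ^ e i)"
  obtain u where u: "B = Q * u"
    using dvd unfolding Q_def by (elim dvdE)
  have "B \<noteq> 0"
    using B0 by auto
  then have "Q \<noteq> 0" "u \<noteq> 0"
    using u by auto
  moreover have "degree Q = (\<Sum>i\<in>S. e i)"
    unfolding Q_def by (simp add: degree_prod_eq_sum_degree degree_linear_power)
  ultimately have "degree u = 0"
    using deg u degree_mult_eq by fastforce
  then obtain c where c: "u = [:c:]"
    by (metis degree_0_id)
  have c1: "poly Q 0 * c = 1"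
    using B0 unfolding u c by (simp add: mult.commute)
  then have "poly Q 0 \<noteq> 0"
    by auto
  then have "c = 1 / poly Q 0"
    using c1 by (simp add: eq_divide_eq mult.commute)
  then have "poly B x = poly Q x / poly Q 0"
    unfolding u c by simp
  also have "\<dots> = (\<Prod>i\<in>S. (x - r i) ^ e i) / (\<Prod>i\<in>S. (- r i) ^ e i)"
    unfolding Q_def by (simp add: poly_prod)
  also have "\<dots> = (\<Prod>i\<in>S. (x - r i) ^ e i / (- r i) ^ e i)"
    by (rule prod_dividef[symmetric])
  also have "\<dots> = (\<Prod>i\<in>S. (1 - x / r i) ^ e i)"
  proof (rule prod.cong[OF refl])
    fix i assume "i \<in> S"
    then have "(x - r i) / (- r i) = 1 - x / r i"
      using nz by (simp add: field_simps)
    then show "(x - r i) ^ e i / (- r i) ^ e i = (1 - x / r i) ^ e i"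
      by (simp flip: power_divide)
  qed
  finally show ?thesis .
qed

lemma linear_power_CHAR:
  "[:a, 1:] ^ CHAR('a) = [:a ^ CHAR('a):] + monom 1 CHAR('a)" for a :: "'a::comm_ring_prime_char"
proof -
  have "([:a:] + monom 1 1) ^ CHAR('a poly) = [:a:] ^ CHAR('a poly) + monom 1 1 ^ CHAR('a poly)"
    by (rule freshmans_dream) simp_all
  moreover have "[:a:] + monom 1 1 = [:a, 1:]"
    by (simp add: monom_altdef)
  ultimately show ?thesis
    by (simp add: poly_const_pow monom_power)
qed

lemma monom_CHAR_minus_of_nat:
  "monom 1 CHAR('a) - of_nat n = ([:- of_nat n, 1:] :: 'a::comm_ring_prime_char poly) ^ CHAR('a)"
proof -
  have "[:- of_nat n :: 'a, 1:] ^ CHAR('a) = [:(- of_nat n) ^ CHAR('a):] + monom 1 CHAR('a)"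
    by (rule linear_power_CHAR)
  also have "[:(- of_nat n :: 'a) ^ CHAR('a):] = - of_nat n"
    by (simp add: minus_power_prime_CHAR[OF refl CHAR_prime] of_nat_power_CHAR of_nat_poly)
  finally have eq: "[:- of_nat n :: 'a, 1:] ^ CHAR('a) = - of_nat n + monom 1 CHAR('a)" .
  show ?thesis
    unfolding eq diff_conv_add_uminus by (rule add.commute)
qed

lemma monom_minus_const_dvd:
  fixes a c :: "'a::comm_ring_1"
  shows "monom 1 n - [:c:] dvd monom a (r + n * q) - monom (a * c ^ q) r"
proof -
  have "monom a (r + n * q) - monom (a * c ^ q) r = monom a r * (monom 1 n ^ q - [:c:] ^ q)"
    by (simp add: mult_monom monom_power poly_const_pow smult_monom algebra_simps)
  moreover have "monom 1 n - [:c:] dvd monom 1 n ^ q - [:c:] ^ q"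
    by (simp add: power_diff_sumr2)
  ultimately show ?thesis
    by simp
qed

lemma pcompose_monom_left: "pcompose (monom a n) q = smult a (q ^ n)"
  by (simp add: monom_altdef pcompose_smult pcompose_hom.hom_power pcompose_pCons)

lemma smult_sum_right: "smult a (\<Sum>x\<in>A. f x) = (\<Sum>x\<in>A. smult a (f x))"
  by (induction A rule: infinite_finite_induct) (simp_all add: smult_add_right)

section \<open>Binomial coefficients and a recurrence for their convolutions\<close>

lemma fbinom_of_nat_eq_0: "t < m \<Longrightarrow> fbinom (of_nat t :: 'a::field) m = 0"
  by (auto simp: fbinom_def prod_zero_iff intro!: bexI[of _ t])

lemma fbinom_minus_one:
  assumes "m < CHAR('a)"
  shows "fbinom (-1 :: 'a::field_prime_char) m = (-1) ^ m"
proof -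
  have "(\<Prod>i<m. (-1 - of_nat i :: 'a)) = (-1) ^ m * of_nat (fact m)"
    by (induction m) (simp_all add: algebra_simps)
  then show ?thesis
    using of_nat_fact_neq_0_below_CHAR[OF assms] by (simp add: fbinom_def)
qed

definition binom_poly :: "'a::field poly \<Rightarrow> nat \<Rightarrow> 'a poly" where
  "binom_poly z m = smult (1 / of_nat (fact m)) (\<Prod>i<m. z - of_nat i)"

lemma poly_binom_poly [simp]: "poly (binom_poly z m) x = fbinom (poly z x) m"
  by (simp add: binom_poly_def fbinom_def poly_prod)

lemma binom_poly_0 [simp]: "binom_poly z 0 = 1"
  by (simp add: binom_poly_def)

lemma binom_poly_Suc:
  fixes z :: "'a::field_prime_char poly"
  assumes "Suc m < CHAR('a)"
  shows "of_nat (Suc m) * binom_poly z (Suc m) = (z - of_nat m) * binom_poly z m"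
  using of_nat_Suc_div_fact_Suc[OF assms]
  by (simp add: binom_poly_def of_nat_poly[where 'a='a] mult_ac del: of_nat_Suc fact_Suc)

lemma fps_mult_nth_eq_0:
  fixes f g :: "'a::comm_semiring_1 fps"
  assumes "\<And>i. i < N \<Longrightarrow> fps_nth f i = 0" "n < N"
  shows "fps_nth (f * g) n = 0"
  using assms by (simp add: fps_mult_nth)

text \<open>With A = sum of a n X^n and B = sum of b n X^n the hypotheses say (1 + X) A' = z A and
  (1 + c X) B' = w B up to order N, so (1 + X) (1 + c X) (A B)' = (z + w + (c z + w) X) A B there;
  comparing coefficients gives the three-term recurrence.\<close>

lemma convolution_recurrence:
  fixes a b :: "nat \<Rightarrow> 'a::comm_ring_1"
  assumes a: "\<And>n. n < N \<Longrightarrow> of_nat (Suc n) * a (Suc n) = (z - of_nat n) * a n"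
    and b: "\<And>n. n < N \<Longrightarrow> of_nat (Suc n) * b (Suc n) = (w - of_nat n * c) * b n"
  defines "g \<equiv> \<lambda>n. \<Sum>k\<le>n. a (n - k) * b k"
  shows "0 < N \<Longrightarrow> g 1 = (z + w) * g 0"
    and "n + 1 < N \<Longrightarrow> of_nat (n + 2) * g (n + 2)
           = (z + w - (1 + c) * of_nat (n + 1)) * g (n + 1) + (c * z + w - c * of_nat n) * g n"
proof -
  define A B where "A = Abs_fps a" and "B = Abs_fps b"
  define P Q :: "'a fps" where "P = 1 + fps_X" and "Q = 1 + fps_const c * fps_X"
  define EA where "EA = P * fps_deriv A - fps_const z * A"
  define EB where "EB = Q * fps_deriv B - fps_const w * B"
  have EA: "fps_nth EA n = 0" if "n < N" for n
    using a[OF that] by (cases n) (simp_all add: EA_def P_def A_def algebra_simps)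
  have EB: "fps_nth EB n = 0" if "n < N" for n
    using b[OF that] by (cases n) (simp_all add: EB_def Q_def B_def algebra_simps)
  define G where "G = B * A"
  have "P * Q * fps_deriv G = (Q * B) * (P * fps_deriv A) + (P * A) * (Q * fps_deriv B)"
    by (simp add: G_def fps_deriv_mult algebra_simps)
  also have "\<dots> = (fps_const z * Q + fps_const w * P) * G + (EA * (Q * B) + EB * (P * A))"
    by (simp add: G_def EA_def EB_def algebra_simps)
  also have "fps_const z * Q + fps_const w * P = fps_const (z + w) + fps_const (c * z + w) * fps_X"
    by (simp add: P_def Q_def algebra_simps flip: fps_const_add fps_const_mult)
  finally have key: "fps_nth (P * Q * fps_deriv G) m
      = fps_nth ((fps_const (z + w) + fps_const (c * z + w) * fps_X) * G) m" if "m < N" for m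
    using that by (simp add: fps_mult_nth_eq_0[OF EA] fps_mult_nth_eq_0[OF EB])
  have PQ: "P * Q * F = F + (1 + fps_const c) * (fps_X * F) + fps_const c * (fps_X * (fps_X * F))"
    for F :: "'a fps"
    by (simp add: P_def Q_def algebra_simps)
  have gG: "fps_nth G n = g n" for n
    unfolding g_def G_def A_def B_def fps_mult_nth atLeast0AtMost by (simp add: mult.commute)
  show "0 < N \<Longrightarrow> g 1 = (z + w) * g 0"
    using key[of 0] by (simp add: PQ gG distrib_right)
  show "n + 1 < N \<Longrightarrow> of_nat (n + 2) * g (n + 2)
           = (z + w - (1 + c) * of_nat (n + 1)) * g (n + 1) + (c * z + w - c * of_nat n) * g n"
    using key[of "Suc n", unfolded PQ] by (cases n) (simp_all add: gG distrib_right algebra_simps)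
qed

section \<open>Factorisation of \<open>b\<^sub>1\<^sub>,\<^sub>s\<close>\<close>

definition b_field :: "nat \<Rightarrow> nat \<Rightarrow> 'a::field \<Rightarrow> 'a" where
  "b_field r s \<gamma> = (\<Sum>k\<le>CHAR('a) - 1. (- (of_nat r / of_nat s)) ^ k
     * fbinom (of_nat r * \<gamma> - 1) (CHAR('a) - 1 - k) * fbinom (of_nat s * \<gamma> - 1) k)"

lemma b_rs_eq_b_field: "b_rs r s \<gamma> = b_field r s \<gamma>"
  by (simp add: b_rs_def b_field_def Let_def)

definition b_poly :: "nat \<Rightarrow> nat \<Rightarrow> 'a::field poly" where
  "b_poly s n = (\<Sum>k\<le>n. binom_poly [:-1, 1:] (n - k)
     * ([:- (1 / of_nat s):] ^ k * binom_poly [:-1, of_nat s:] k))"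

lemma poly_b_poly: "poly (b_poly s (CHAR('a) - 1)) \<gamma> = b_field 1 s (\<gamma> :: 'a::field)"
proof -
  have lin: "poly [:-1, c:] x = c * x - 1" for c x :: 'a
    by simp
  show ?thesis
    by (simp add: b_poly_def b_field_def poly_sum lin mult_ac)
qed

lemma b_poly_0 [simp]: "b_poly s 0 = 1"
  by (simp add: b_poly_def)

lemma b_poly_recurrence:
  fixes s :: nat
  defines "c \<equiv> [:- (1 / of_nat s):] :: 'a::field_prime_char poly"
  shows "b_poly s 1 = ([:-1, 1:] + c * [:-1, of_nat s:]) * b_poly s 0"
    and "n + 2 < CHAR('a) \<Longrightarrow> of_nat (n + 2) * b_poly s (n + 2)
           = ([:-1, 1:] + c * [:-1, of_nat s:] - (1 + c) * of_nat (n + 1)) * b_poly s (n + 1)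
             + (c * [:-1, 1:] + c * [:-1, of_nat s:] - c * of_nat n) * b_poly s n"
proof -
  have a: "of_nat (Suc n) * binom_poly [:-1, 1:] (Suc n)
      = ([:-1, 1:] - of_nat n) * (binom_poly [:-1, 1:] n :: 'a poly)"
    if "n < CHAR('a) - 1" for n
    using that by (intro binom_poly_Suc) simp
  define L :: "'a poly" where "L = [:-1, of_nat s:]"
  have b: "of_nat (Suc n) * (c ^ Suc n * binom_poly L (Suc n))
      = (c * L - of_nat n * c) * (c ^ n * binom_poly L n)"
    if "n < CHAR('a) - 1" for n
  proof -
    have "of_nat (Suc n) * (c ^ Suc n * binom_poly L (Suc n))
        = c ^ Suc n * (of_nat (Suc n) * binom_poly L (Suc n))"
      by (simp only: mult_ac)
    also have "\<dots> = c ^ Suc n * ((L - of_nat n) * binom_poly L n)"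
      using that by (subst binom_poly_Suc) simp_all
    also have "\<dots> = (c * L - of_nat n * c) * (c ^ n * binom_poly L n)"
      by (simp add: algebra_simps)
    finally show ?thesis .
  qed
  have bp: "b_poly s n = (\<Sum>k\<le>n. binom_poly [:-1, 1:] (n - k) * (c ^ k * binom_poly L k))" for n
    by (simp add: b_poly_def c_def L_def)
  note rec = convolution_recurrence[where N = "CHAR('a) - 1", OF a b, folded bp, unfolded L_def]
  show "b_poly s 1 = ([:-1, 1:] + c * [:-1, of_nat s:]) * b_poly s 0"
    using rec(1) prime_gt_1_nat[OF CHAR_prime[where 'a='a]] by simp
  show "n + 2 < CHAR('a) \<Longrightarrow> of_nat (n + 2) * b_poly s (n + 2)
           = ([:-1, 1:] + c * [:-1, of_nat s:] - (1 + c) * of_nat (n + 1)) * b_poly s (n + 1)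
             + (c * [:-1, 1:] + c * [:-1, of_nat s:] - c * of_nat n) * b_poly s n"
    using rec(2)[of n] by (simp add: algebra_simps)
qed

lemma degree_b_poly:
  assumes s: "(of_nat s :: 'a::field_prime_char) \<noteq> 0"
  shows "n < CHAR('a) \<Longrightarrow> degree (b_poly s n :: 'a poly) \<le> n div 2"
proof (induction n rule: less_induct)
  case (less n)
  define c :: "'a poly" where "c = [:- (1 / of_nat s):]"
  show ?case
  proof (cases n)
    case (Suc n')
    show ?thesis
    proof (cases n')
      case 0
      have "[:-1, 1:] + c * [:-1, of_nat s:] = [:1 / of_nat s - 1:]"
        using s by (simp add: c_def)
      then show ?thesis
        using b_poly_recurrence(1)[of s, where 'a='a, folded c_def] Suc 0 by simp
    next
      case (Suc m)
      have n: "n = m + 2" "m + 2 < CHAR('a)"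
        using less.prems \<open>n = Suc n'\<close> Suc by simp_all
      have "degree ([:-1, 1:] + c * [:-1, of_nat s:] - (1 + c) * of_nat (m + 1)) = 0"
        using s by (simp add: c_def of_nat_poly one_pCons)
      then have "degree (([:-1, 1:] + c * [:-1, of_nat s:] - (1 + c) * of_nat (m + 1))
          * b_poly s (m + 1)) \<le> (m + 2) div 2"
        using less.IH[of "m + 1"] n by (intro order.trans[OF degree_mult_le]) simp_all
      moreover have "degree (c * [:-1, 1:] + c * [:-1, of_nat s:] - c * of_nat m) \<le> 1"
        by (simp add: c_def of_nat_poly)
      then have "degree ((c * [:-1, 1:] + c * [:-1, of_nat s:] - c * of_nat m) * b_poly s m)
          \<le> (m + 2) div 2"
        using less.IH[of m] n by (intro order.trans[OF degree_mult_le]) simp_all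
      ultimately have "degree (of_nat (m + 2) * b_poly s (m + 2) :: 'a poly) \<le> (m + 2) div 2"
        unfolding b_poly_recurrence(2)[where s = s, OF n(2), folded c_def] by (intro degree_add_le)
      moreover have "(of_nat (m + 2) :: 'a) \<noteq> 0"
        using n by (intro of_nat_neq_0_below_CHAR) simp_all
      ultimately show ?thesis
        using n by (simp add: of_nat_poly[where 'a='a])
    qed
  qed simp
qed

text \<open>For 0 < i < p, the condition i + (s i mod p) < p says that the floor of (s + 1) i / p
  equals the floor of s i / p.\<close>

definition b_roots :: "nat \<Rightarrow> nat \<Rightarrow> nat set" where
  "b_roots p s = {i \<in> {0<..<p}. i + (s * i) mod p < p}"

lemma b_field_root:
  assumes "0 < s" "s < CHAR('a)" "j \<in> b_roots CHAR('a) s"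
  shows "b_field 1 s (of_nat j :: 'a::field_prime_char) = 0"
proof -
  define p u where "p = CHAR('a)" and "u = (s * j) mod p"
  have j: "0 < j" "j < p" "j + u < p"
    using assms(3) by (simp_all add: b_roots_def p_def u_def)
  have "0 < u"
    unfolding u_def p_def using assms j by (intro mult_mod_prime_pos) (simp_all add: p_def)
  have ej: "(of_nat j :: 'a) - 1 = of_nat (j - 1)"
    using j by simp
  have eu: "of_nat s * of_nat j - 1 = (of_nat (u - 1) :: 'a)"
    using \<open>0 < u\<close> by (simp add: u_def p_def flip: of_nat_mult)
  have "fbinom (of_nat j - 1 :: 'a) (p - 1 - k) * fbinom (of_nat s * of_nat j - 1) k = 0" for k
  proof (cases "k < u")
    case True
    then have "j - 1 < p - 1 - k"
      using j by linarith
    then show ?thesis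
      unfolding ej by (simp only: fbinom_of_nat_eq_0 mult_zero_left)
  next
    case False
    then have "u - 1 < k"
      using \<open>0 < u\<close> by linarith
    then show ?thesis
      unfolding eu by (simp only: fbinom_of_nat_eq_0 mult_zero_right)
  qed
  then show ?thesis
    unfolding b_field_def p_def[symmetric] of_nat_1 mult_1
    by (intro sum.neutral ballI) (metis (no_types) mult.assoc mult_zero_right)
qed

lemma b_field_at_0:
  assumes "0 < s" "s + 1 < CHAR('a)"
  shows "b_field 1 s (0 :: 'a::field_prime_char) = 1"
proof -
  define p where "p = CHAR('a)"
  define x :: 'a where "x = - (1 / of_nat s)"
  have "odd p"
    using assms unfolding p_def by (intro prime_odd_nat) simp_all
  have "(of_nat s :: 'a) \<noteq> 0" "(of_nat (s + 1) :: 'a) \<noteq> 0"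
    using assms by (simp_all only: of_nat_neq_0_below_CHAR) simp_all
  then have "x \<noteq> 1"
    by (auto simp: x_def field_simps add_eq_0_iff)
  have "fbinom (-1 :: 'a) (p - 1 - k) * fbinom (-1) k = 1" if "k \<le> p - 1" for k
  proof -
    have "k < p"
      using that \<open>odd p\<close> by (cases p) auto
    then have "k < CHAR('a)" "p - 1 - k < CHAR('a)"
      by (auto simp: p_def)
    then have "fbinom (-1 :: 'a) (p - 1 - k) * fbinom (-1) k = (-1) ^ (p - 1 - k + k)"
      by (simp add: fbinom_minus_one power_add)
    also have "p - 1 - k + k = p - 1"
      using that by simp
    finally show ?thesis
      using \<open>odd p\<close> by simp
  qed
  moreover have "{..p - 1} = {..<p}"
    using \<open>odd p\<close> by (cases p) auto
  ultimately have "b_field 1 s (0 :: 'a) = (\<Sum>k<p. x ^ k)"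
    unfolding b_field_def p_def[symmetric] by (auto simp: x_def mult.assoc intro!: sum.cong)
  also have "\<dots> = (x ^ p - 1) / (x - 1)"
    using \<open>x \<noteq> 1\<close> by (rule geometric_sum)
  also have "x ^ p = x"
    unfolding x_def p_def by (simp add: minus_power_prime_CHAR power_one_over of_nat_power_CHAR)
  finally show ?thesis
    using \<open>x \<noteq> 1\<close> by simp
qed

lemma card_b_roots:
  assumes "prime p" "0 < s" "s + 1 < p"
  shows "p - 1 \<le> 2 * card (b_roots p s)"
proof -
  define J C where "J = b_roots p s" and "C = {0<..<p} - J"
  have JC: "J \<subseteq> {0<..<p}" "finite J"
    by (auto simp: J_def b_roots_def intro: finite_subset)
  have "p - i \<in> J" if "i \<in> C" for i
  proof -
    have i: "0 < i" "i < p" "p \<le> i + (s * i) mod p"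
      using that by (auto simp: C_def J_def b_roots_def)
    have "0 < (s * i) mod p"
      using assms i by (intro mult_mod_prime_pos) simp_all
    moreover have "(i + (s * i) mod p) mod p = ((s + 1) * i) mod p"
      by (simp add: mod_add_right_eq algebra_simps)
    then have "i + (s * i) mod p \<noteq> p"
      using mult_mod_prime_pos[of p "s + 1" i] assms i by auto
    moreover have "int ((s * (p - i)) mod p) = (- (int s * int i) + int s * int p) mod int p"
      unfolding of_nat_mod using i by (simp add: of_nat_diff algebra_simps)
    then have "int ((s * (p - i)) mod p) = (- (int s * int i)) mod int p"
      by (simp only: mod_mult_self1)
    ultimately have "(s * (p - i)) mod p = p - (s * i) mod p"
      by (simp add: zmod_zminus1_eq_if flip: of_nat_mult of_nat_mod)
    then show ?thesis
      using i \<open>i + (s * i) mod p \<noteq> p\<close> by (simp add: J_def b_roots_def)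
  qed
  then have "card C \<le> card J"
    by (intro card_inj_on_le[of "\<lambda>i. p - i"]) (auto simp: C_def inj_on_def JC)
  moreover have "card C = p - 1 - card J"
    using JC by (simp add: C_def card_Diff_subset)
  moreover have "card J \<le> p - 1"
    using card_mono[OF _ JC(1)] by simp
  ultimately show ?thesis
    unfolding J_def by linarith
qed

lemma b_field_eq_prod:
  assumes "0 < s" "s + 1 < CHAR('a)"
  shows "b_field 1 s (\<gamma> :: 'a::field_prime_char) = (\<Prod>i\<in>b_roots CHAR('a) s. 1 - \<gamma> / of_nat i)"
proof -
  define p J where "p = CHAR('a)" and "J = b_roots CHAR('a) s"
  define B :: "'a poly" where "B = b_poly s (p - 1)"
  have J: "J \<subseteq> {0<..<p}" "finite J"
    by (auto simp: J_def p_def b_roots_def intro: finite_subset)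
  have B: "poly B x = b_field 1 s x" for x
    unfolding B_def p_def by (rule poly_b_poly)
  have "(\<Prod>i\<in>J. [:- of_nat i, 1:] ^ 1) dvd B"
    using b_field_root[of s _, where 'a='a] assms J
    by (auto intro!: prod_linear_factors_dvd inj_on_subset[OF inj_on_of_nat_below_CHAR]
        simp: B p_def J_def)
  moreover have "poly B 0 = 1"
    using b_field_at_0[OF assms] by (simp add: B)
  moreover have "degree B \<le> (\<Sum>i\<in>J. 1)"
  proof -
    have "(of_nat s :: 'a) \<noteq> 0"
      using assms by (intro of_nat_neq_0_below_CHAR) simp_all
    then have "degree B \<le> (p - 1) div 2"
      unfolding B_def p_def by (intro degree_b_poly) simp_all
    also have "\<dots> \<le> card J"
      using card_b_roots[of p s] assms by (simp add: J_def p_def)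
    finally show ?thesis
      by simp
  qed
  moreover have "(of_nat i :: 'a) \<noteq> 0" if "i \<in> J" for i
    using J that by (intro of_nat_neq_0_below_CHAR) (auto simp: p_def)
  ultimately have "poly B \<gamma> = (\<Prod>i\<in>J. (1 - \<gamma> / of_nat i) ^ 1)"
    by (intro poly_eq_prod_of_linear_factors_dvd J)
  then show ?thesis
    by (simp add: B J_def)
qed

section \<open>Factorisation of the Laguerre value\<close>

definition laguerre_field :: "'a::field \<Rightarrow> 'a \<Rightarrow> 'a" where
  "laguerre_field a x = (\<Sum>k\<le>CHAR('a) - 1. fbinom (a - 1) (CHAR('a) - 1 - k) * (- x) ^ k / of_nat (fact k))"

lemma laguerre_eq_laguerre_field: "laguerre a x = laguerre_field a x"
  by (simp add: laguerre_def laguerre_field_def Let_def)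

definition laguerre_poly :: "nat \<Rightarrow> 'a::field poly" where
  "laguerre_poly n = (\<Sum>k\<le>n. binom_poly (monom 1 CHAR('a) - 1) (n - k)
     * smult (1 / of_nat (fact k)) ((monom 1 1 - monom 1 CHAR('a)) ^ k))"

lemma poly_laguerre_poly:
  "poly (laguerre_poly (CHAR('a) - 1)) x = laguerre_field (x ^ CHAR('a)) (x ^ CHAR('a) - x :: 'a::field)"
  by (simp add: laguerre_poly_def laguerre_field_def poly_sum poly_monom)

lemma laguerre_poly_recurrence:
  defines "p \<equiv> CHAR('a::field_prime_char)"
  shows "laguerre_poly 1 = ([:-1, 1:] :: 'a poly)"
    and "n + 2 < p \<Longrightarrow> of_nat (n + 2) * laguerre_poly (n + 2)
           = ([:-1, 1:] - of_nat (n + 1)) * laguerre_poly (n + 1)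
             + (monom 1 1 - monom 1 p) * (laguerre_poly n :: 'a poly)"
proof -
  define z t :: "'a poly" where "z = monom 1 p - 1" and "t = monom 1 1 - monom 1 p"
  have a: "of_nat (Suc n) * binom_poly z (Suc n) = (z - of_nat n) * binom_poly z n"
    if "n < p - 1" for n
    using that by (intro binom_poly_Suc) (simp add: p_def)
  have b: "of_nat (Suc n) * smult (1 / of_nat (fact (Suc n))) (t ^ Suc n)
      = (t - of_nat n * 0) * smult (1 / of_nat (fact n)) (t ^ n)"
    if "n < p - 1" for n
    using that of_nat_Suc_div_fact_Suc[of n, where 'a='a]
    by (simp add: p_def of_nat_poly[where 'a='a] del: of_nat_Suc fact_Suc)
  have lp: "laguerre_poly n = (\<Sum>k\<le>n. binom_poly z (n - k) * smult (1 / of_nat (fact k)) (t ^ k))"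
    for n
    by (simp add: laguerre_poly_def z_def t_def p_def)
  have zt: "z + t = [:-1, 1:]"
    by (simp add: z_def t_def monom_altdef one_pCons)
  note rec = convolution_recurrence[where N = "p - 1", OF a b, folded lp, unfolded zt]
  show "laguerre_poly 1 = ([:-1, 1:] :: 'a poly)"
    using rec(1) prime_gt_1_nat[OF CHAR_prime[where 'a='a]] by (simp add: p_def lp)
  show "n + 2 < p \<Longrightarrow> of_nat (n + 2) * laguerre_poly (n + 2)
           = ([:-1, 1:] - of_nat (n + 1)) * laguerre_poly (n + 1)
             + (monom 1 1 - monom 1 p) * (laguerre_poly n :: 'a poly)"
    using rec(2)[of n] by (simp add: t_def)
qed

lemma degree_laguerre_poly:
  defines "p \<equiv> CHAR('a::field_prime_char)"
  shows "n < p \<Longrightarrow> degree (laguerre_poly n :: 'a poly) \<le> p * (n div 2) + (if odd n then p - 1 else 0)"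
proof (induction n rule: less_induct)
  case (less n)
  have p2: "2 \<le> p"
    unfolding p_def by (rule prime_ge_2_nat[OF CHAR_prime])
  show ?case
  proof (cases n)
    case (Suc n')
    show ?thesis
    proof (cases n')
      case 0
      then show ?thesis
        using laguerre_poly_recurrence(1)[where 'a='a] Suc p2 by simp
    next
      case (Suc m)
      have n: "n = m + 2" "m + 2 < p"
        using less.prems \<open>n = Suc n'\<close> Suc by simp_all
      have "degree ([:-1, 1:] - of_nat (m + 1) :: 'a poly) \<le> 1"
        by (simp add: of_nat_poly)
      then have "degree (([:-1, 1:] - of_nat (m + 1)) * (laguerre_poly (m + 1) :: 'a poly))
          \<le> 1 + (p * ((m + 1) div 2) + (if odd (m + 1) then p - 1 else 0))"
        using less.IH[of "m + 1"] n by (intro order.trans[OF degree_mult_le] add_mono) simp_all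
      also have "\<dots> \<le> p * ((m + 2) div 2) + (if odd (m + 2) then p - 1 else 0)"
        using p2 by (cases "even m") (auto elim!: evenE oddE simp: algebra_simps)
      finally have 1: "degree (([:-1, 1:] - of_nat (m + 1)) * (laguerre_poly (m + 1) :: 'a poly))
          \<le> p * ((m + 2) div 2) + (if odd (m + 2) then p - 1 else 0)" .
      have "degree (monom 1 1 - monom 1 p :: 'a poly) \<le> p"
        using p2 by (intro degree_diff_le) (simp_all add: degree_monom_eq)
      then have "degree ((monom 1 1 - monom 1 p) * (laguerre_poly m :: 'a poly))
          \<le> p * ((m + 2) div 2) + (if odd (m + 2) then p - 1 else 0)"
        using less.IH[of m] n by (intro order.trans[OF degree_mult_le]) simp_all
      with 1 have "degree (of_nat (m + 2) * laguerre_poly (m + 2) :: 'a poly)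
          \<le> p * ((m + 2) div 2) + (if odd (m + 2) then p - 1 else 0)"
        unfolding laguerre_poly_recurrence(2)[OF n(2)[unfolded p_def], folded p_def]
        by (intro degree_add_le)
      moreover have "(of_nat (m + 2) :: 'a) \<noteq> 0"
        using n by (intro of_nat_neq_0_below_CHAR) (simp_all add: p_def)
      ultimately show ?thesis
        using n by (simp add: of_nat_poly[where 'a='a])
    qed
  qed (simp add: laguerre_poly_def)
qed

lemma prod_power_dvd_prod_power_mult:
  fixes L :: "nat \<Rightarrow> 'a::comm_semiring_1"
  assumes "m + k = p - 1"
  shows "(\<Prod>j\<in>{0<..<p}. L j ^ (p - j)) dvd (\<Prod>j\<in>{1..m}. L j ^ p) * (\<Prod>j\<in>{0<..<p}. L j) ^ k"
proof -
  have "{1..m} = {j \<in> {0<..<p}. j \<le> m}"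
    using assms by auto
  then have "(\<Prod>j\<in>{1..m}. L j ^ p) = (\<Prod>j\<in>{0<..<p}. if j \<le> m then L j ^ p else 1)"
    by (simp only: prod.inter_filter finite_greaterThanLessThan)
  then have "(\<Prod>j\<in>{1..m}. L j ^ p) * (\<Prod>j\<in>{0<..<p}. L j) ^ k
      = (\<Prod>j\<in>{0<..<p}. (if j \<le> m then L j ^ p else 1) * L j ^ k)"
    by (simp add: prod_power_distrib prod.distrib)
  also have "(\<Prod>j\<in>{0<..<p}. L j ^ (p - j)) dvd \<dots>"
  proof (rule prod_dvd_prod)
    fix j assume "j \<in> {0<..<p}"
    show "L j ^ (p - j) dvd (if j \<le> m then L j ^ p else 1) * L j ^ k"
    proof (cases "j \<le> m")
      case True
      then show ?thesis
        by (simp add: dvd_mult2 le_imp_power_dvd)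
    next
      case False
      then show ?thesis
        using assms by (simp add: le_imp_power_dvd)
    qed
  qed
  finally show ?thesis .
qed

lemma prod_power_dvd_laguerre_poly:
  "(\<Prod>j\<in>{0<..<CHAR('a)}. [:- of_nat j, 1:] ^ (CHAR('a) - j))
     dvd (laguerre_poly (CHAR('a) - 1) :: 'a::field_prime_char poly)"
proof -
  define p where "p = CHAR('a)"
  define L :: "nat \<Rightarrow> 'a poly" where "L j = [:- of_nat j, 1:]" for j
  define t :: "'a poly" where "t = monom 1 1 - monom 1 p"
  have "(\<Prod>j\<in>{0<..<p}. [:- of_nat j, 1:]) dvd t"
    by (intro prod_linear_factors_dvd inj_on_subset[OF inj_on_of_nat_below_CHAR])
      (auto simp: t_def p_def poly_monom of_nat_power_CHAR)
  then have t: "(\<Prod>j\<in>{0<..<p}. L j) ^ k dvd t ^ k" for k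
    by (simp add: L_def dvd_power_same)
  have binom: "binom_poly (monom 1 p - 1) m = smult (1 / of_nat (fact m)) (\<Prod>j\<in>{1..m}. L j ^ p)"
    for m
  proof -
    have "monom 1 p - 1 - of_nat i = monom 1 p - (of_nat (Suc i) :: 'a poly)" for i
      by simp
    also have "\<dots> i = L (Suc i) ^ p" for i
      unfolding L_def p_def by (rule monom_CHAR_minus_of_nat)
    finally have "monom 1 p - 1 - of_nat i = L (Suc i) ^ p" for i .
    then show ?thesis
      by (simp add: binom_poly_def prod.atLeast1_atMost_eq)
  qed
  have "(\<Prod>j\<in>{0<..<p}. L j ^ (p - j)) dvd binom_poly (monom 1 p - 1) (p - 1 - k)
      * smult (1 / of_nat (fact k)) (t ^ k)" if "k \<le> p - 1" for k
  proof -
    have "(\<Prod>j\<in>{0<..<p}. L j ^ (p - j))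
        dvd (\<Prod>j\<in>{1..p - 1 - k}. L j ^ p) * (\<Prod>j\<in>{0<..<p}. L j) ^ k"
      using that by (intro prod_power_dvd_prod_power_mult) simp
    also have "\<dots> dvd (\<Prod>j\<in>{1..p - 1 - k}. L j ^ p) * t ^ k"
      by (intro mult_dvd_mono dvd_refl t)
    finally have "(\<Prod>j\<in>{0<..<p}. L j ^ (p - j)) dvd (\<Prod>j\<in>{1..p - 1 - k}. L j ^ p) * t ^ k" .
    then show ?thesis
      unfolding binom by (simp add: dvd_smult)
  qed
  then show ?thesis
    unfolding laguerre_poly_def p_def[symmetric] t_def[symmetric] L_def[symmetric]
    by (intro dvd_sum) simp
qed

lemma laguerre_field_at_0:
  assumes "odd CHAR('a)"
  shows "laguerre_field 0 0 = (1 :: 'a::field_prime_char)"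
proof -
  define p where "p = CHAR('a)"
  have "p - 1 < CHAR('a)"
    using assms by (cases p) (simp_all add: p_def)
  have "laguerre_field 0 (0 :: 'a) = (\<Sum>k\<le>p - 1. if k = 0 then fbinom (-1 :: 'a) (p - 1) else 0)"
    unfolding laguerre_field_def p_def[symmetric] by (intro sum.cong) (auto simp: power_0_left)
  also have "\<dots> = (-1) ^ (p - 1)"
    using \<open>p - 1 < CHAR('a)\<close> by (simp add: fbinom_minus_one)
  also have "\<dots> = 1"
    using assms by (cases p) (simp_all add: p_def)
  finally show ?thesis .
qed

lemma sum_diff_greaterThanLessThan: "(\<Sum>j\<in>{0<..<p}. p - j) = p * (p - 1) div (2 :: nat)"
proof -
  have "(\<Sum>j\<in>{0<..<p}. p - j) = (\<Sum>j\<in>{0<..<p}. j)"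
    by (rule sum.reindex_bij_witness[of _ "\<lambda>j. p - j" "\<lambda>j. p - j"]) auto
  moreover have "(\<Sum>j\<in>{0<..<p}. p - j) + (\<Sum>j\<in>{0<..<p}. j) = p * (p - 1)"
    by (simp add: sum.distrib[symmetric])
  ultimately show ?thesis
    by simp
qed

lemma laguerre_field_eq_prod:
  fixes x :: "'a::field_prime_char"
  assumes "odd CHAR('a)"
  shows "laguerre_field (x ^ CHAR('a)) (x ^ CHAR('a) - x)
           = (\<Prod>j\<in>{0<..<CHAR('a)}. (1 - x / of_nat j) ^ (CHAR('a) - j))"
proof -
  define p where "p = CHAR('a)"
  define B :: "'a poly" where "B = laguerre_poly (p - 1)"
  have B: "poly B y = laguerre_field (y ^ p) (y ^ p - y)" for y
    unfolding B_def p_def by (rule poly_laguerre_poly)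
  have "p - 1 < p" "even (p - 1)"
    using assms by (simp_all add: p_def)
  have "degree B \<le> p * ((p - 1) div 2)"
    using degree_laguerre_poly[of "p - 1", where 'a='a] \<open>p - 1 < p\<close> \<open>even (p - 1)\<close>
    by (simp add: B_def p_def)
  also have "\<dots> = (\<Sum>j\<in>{0<..<p}. p - j)"
    using \<open>even (p - 1)\<close> by (simp add: sum_diff_greaterThanLessThan div_mult_swap)
  finally have "degree B \<le> (\<Sum>j\<in>{0<..<p}. p - j)" .
  moreover have "poly B 0 = 1"
    using assms \<open>p - 1 < p\<close> by (simp add: B laguerre_field_at_0 power_0_left)
  moreover have "(of_nat j :: 'a) \<noteq> 0" if "j \<in> {0<..<p}" for j
    using that by (intro of_nat_neq_0_below_CHAR) (simp_all add: p_def)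
  ultimately have "poly B x = (\<Prod>j\<in>{0<..<p}. (1 - x / of_nat j) ^ (p - j))"
    using prod_power_dvd_laguerre_poly[where 'a='a]
    by (intro poly_eq_prod_of_linear_factors_dvd) (simp_all add: B_def p_def)
  then show ?thesis
    by (simp add: B p_def)
qed

section \<open>Products of the \<open>b\<^sub>1\<^sub>,\<^sub>s\<close>\<close>

lemma div_add_less_divisor:
  fixes a i p :: nat
  assumes "i < p"
  shows "(a + i) div p = a div p + (if a mod p + i < p then 0 else 1)"
proof -
  have "(a + i) div p = a div p + (a mod p + i) div p"
    using assms div_add1_eq[of a i p] by simp
  moreover have "a mod p + i < 2 * p"
    using assms mod_less_divisor[of p a] by linarith
  then have "(a mod p + i) div p = (if a mod p + i < p then 0 else 1)"
    by (auto simp: div_eq_0_iff less_mult_imp_div_less le_div_geq intro!: le_antisym)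
  ultimately show ?thesis
    by simp
qed

lemma card_b_roots_containing:
  assumes "0 < i" "i < p"
  shows "card {s \<in> {1..k - 1}. i \<in> b_roots p s} = k - 1 - (k * i) div p"
proof (induction k)
  case (Suc k)
  show ?case
  proof (cases "k = 0")
    case False
    define A where "A = {s \<in> {1..k - 1}. i \<in> b_roots p s}"
    have "finite A" "k \<notin> A"
      using False by (auto simp: A_def)
    have "{1..Suc k - 1} = insert k {1..k - 1}"
      using False by auto
    then have A: "{s \<in> {1..Suc k - 1}. i \<in> b_roots p s}
        = (if i + (k * i) mod p < p then insert k A else A)"
      using assms by (auto simp: A_def b_roots_def)
    have "(k * i + i) div p = (k * i) div p + (if (k * i) mod p + i < p then 0 else 1)"
      using assms(2) by (rule div_add_less_divisor)
    moreover have "(k * i) div p < k"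
      using False assms by (simp add: div_less_iff_less_mult)
    ultimately show ?thesis
      using Suc.IH \<open>finite A\<close> \<open>k \<notin> A\<close> unfolding A A_def[symmetric]
      by (auto simp: add.commute)
  qed simp
qed simp

lemma prod_prod_eq_prod_power_card:
  fixes f :: "'b \<Rightarrow> 'a::comm_monoid_mult"
  assumes "finite S" "finite I" "\<And>s. s \<in> S \<Longrightarrow> J s \<subseteq> I"
  shows "(\<Prod>s\<in>S. \<Prod>i\<in>J s. f i) = (\<Prod>i\<in>I. f i ^ card {s \<in> S. i \<in> J s})"
proof -
  have "(\<Prod>s\<in>S. \<Prod>i\<in>J s. f i) = (\<Prod>s\<in>S. \<Prod>i\<in>I. if i \<in> J s then f i else 1)"
  proof (rule prod.cong[OF refl])
    fix s assume "s \<in> S"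
    then have "{i \<in> I. i \<in> J s} = J s"
      using assms(3) by auto
    then show "(\<Prod>i\<in>J s. f i) = (\<Prod>i\<in>I. if i \<in> J s then f i else 1)"
      using prod.inter_filter[OF assms(2), of f "\<lambda>i. i \<in> J s"] by simp
  qed
  also have "\<dots> = (\<Prod>i\<in>I. \<Prod>s\<in>S. if i \<in> J s then f i else 1)"
    by (rule prod.swap)
  also have "\<dots> = (\<Prod>i\<in>I. f i ^ card {s \<in> S. i \<in> J s})"
    using assms(1) by (simp add: prod.inter_filter[symmetric])
  finally show ?thesis .
qed

definition b_prod :: "nat \<Rightarrow> 'a::field \<Rightarrow> 'a" where
  "b_prod k \<gamma> = (\<Prod>s = 1..k - 1. b_field 1 s \<gamma>)"

lemma b_prod_eq_prod:
  assumes "k < CHAR('a)"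
  shows "b_prod k (\<gamma> :: 'a::field_prime_char)
           = (\<Prod>i\<in>{0<..<CHAR('a)}. (1 - \<gamma> / of_nat i) ^ (k - 1 - (k * i) div CHAR('a)))"
proof -
  define p where "p = CHAR('a)"
  have "b_prod k \<gamma> = (\<Prod>s = 1..k - 1. \<Prod>i\<in>b_roots p s. 1 - \<gamma> / of_nat i)"
    unfolding b_prod_def p_def using assms by (intro prod.cong refl b_field_eq_prod) auto
  also have "\<dots> = (\<Prod>i\<in>{0<..<p}. (1 - \<gamma> / of_nat i) ^ card {s \<in> {1..k - 1}. i \<in> b_roots p s})"
    by (rule prod_prod_eq_prod_power_card) (auto simp: b_roots_def)
  also have "\<dots> = (\<Prod>i\<in>{0<..<p}. (1 - \<gamma> / of_nat i) ^ (k - 1 - (k * i) div p))"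
    by (intro prod.cong refl arg_cong[where f = "power _"] card_b_roots_containing) auto
  finally show ?thesis
    unfolding p_def .
qed

lemma prod_power_reindex_mult:
  fixes \<gamma> :: "'a::field_prime_char"
  assumes "0 < h" "h < CHAR('a)"
  shows "(\<Prod>i\<in>{0<..<CHAR('a)}. (1 - of_nat h * \<gamma> / of_nat i) ^ e i)
           = (\<Prod>i\<in>{0<..<CHAR('a)}. (1 - \<gamma> / of_nat i) ^ e ((h * i) mod CHAR('a)))"
proof -
  have "(of_nat h :: 'a) \<noteq> 0"
    using assms by (rule of_nat_neq_0_below_CHAR)
  have "(\<Prod>i\<in>{0<..<CHAR('a)}. (1 - of_nat h * \<gamma> / of_nat i) ^ e i)
      = (\<Prod>i\<in>{0<..<CHAR('a)}. (1 - of_nat h * \<gamma> / of_nat ((h * i) mod CHAR('a))) ^ e ((h * i) mod CHAR('a)))"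
    using assms by (intro prod.reindex_bij_betw[symmetric] bij_betw_mult_mod_prime) simp_all
  also have "\<dots> = (\<Prod>i\<in>{0<..<CHAR('a)}. (1 - \<gamma> / of_nat i) ^ e ((h * i) mod CHAR('a)))"
    using \<open>of_nat h \<noteq> 0\<close> by (intro prod.cong refl) simp
  finally show ?thesis .
qed

text \<open>Both sides of the identity equal \<open>h k - 1 - \<lfloor>h k i / p\<rfloor>\<close>, the floor being computed
  once from \<open>h k = q p + r\<close> and once from \<open>h i = a p + b\<close>.\<close>

lemma exponent_identity:
  fixes p h k i :: nat
  assumes "0 < i" "i < p" "0 < h" "0 < k" "0 < (h * k) mod p"
  defines "q \<equiv> (h * k) div p" and "r \<equiv> (h * k) mod p"
  shows "q * (p - i) + (r - 1 - (r * i) div p)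
       = (k - 1 - (k * ((h * i) mod p)) div p) + k * (h - 1 - (h * i) div p)"
proof -
  define a b where "a = (h * i) div p" and "b = (h * i) mod p"
  define F where "F = (h * k * i) div p"
  have "h * k * i = (q * p + r) * i"
    by (simp add: q_def r_def)
  also have "\<dots> = r * i + (q * i) * p"
    by (simp add: algebra_simps)
  finally have F1: "F = q * i + (r * i) div p"
    using assms(2) by (simp add: F_def)
  have "h * k * i = k * (a * p + b)"
    by (simp add: a_def b_def algebra_simps)
  also have "\<dots> = k * b + (k * a) * p"
    by (simp add: algebra_simps)
  finally have F2: "F = k * a + (k * b) div p"
    using assms(2) by (simp add: F_def)
  have "(r * i) div p < r" "(k * b) div p < k" "a < h"
    using assms by (simp_all add: r_def a_def b_def div_less_iff_less_mult)
  moreover have "q * (p - i) + q * i = q * p"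
    using assms(2) by (simp flip: add_mult_distrib2)
  moreover have "k * (h - 1 - a) + k * a + k = k * (h - 1 - a + a + 1)"
    by (simp add: add_mult_distrib2)
  then have "k * (h - 1 - a) + k * a + k = h * k"
    using \<open>a < h\<close> by simp
  moreover have "h * k = q * p + r"
    by (simp add: q_def r_def)
  ultimately show ?thesis
    using F1 F2 unfolding a_def[symmetric] b_def[symmetric] by linarith
qed

lemma prod_power_mult_prod_power:
  "(\<Prod>i\<in>I. a i ^ m i) ^ q * (\<Prod>i\<in>I. a i ^ n i) = (\<Prod>i\<in>I. (a i :: 'a::comm_semiring_1) ^ (m i * q + n i))"
  by (simp add: prod_power_distrib prod.distrib power_mult power_add)

lemma laguerre_power_mult_b_prod:
  fixes \<gamma> :: "'a::field_prime_char"
  assumes "odd CHAR('a)" "0 < h" "h < CHAR('a)" "0 < k" "k < CHAR('a)"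
  defines "p \<equiv> CHAR('a)"
  shows "laguerre_field (\<gamma> ^ p) (\<gamma> ^ p - \<gamma>) ^ ((h * k) div p) * b_prod ((h * k) mod p) \<gamma>
           = b_prod k (of_nat h * \<gamma>) * b_prod h \<gamma> ^ k"
proof -
  define q r where "q = (h * k) div p" and "r = (h * k) mod p"
  define l where "l i = 1 - \<gamma> / of_nat i" for i
  have "0 < r"
    using assms by (simp add: r_def p_def mult_mod_prime_pos)
  have "r < p"
    by (simp add: r_def p_def)
  have "laguerre_field (\<gamma> ^ p) (\<gamma> ^ p - \<gamma>) ^ q * b_prod r \<gamma>
      = (\<Prod>i\<in>{0<..<p}. l i ^ (p - i)) ^ q * (\<Prod>i\<in>{0<..<p}. l i ^ (r - 1 - (r * i) div p))"
    using assms(1) \<open>r < p\<close> by (simp add: laguerre_field_eq_prod b_prod_eq_prod l_def p_def)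
  also have "\<dots> = (\<Prod>i\<in>{0<..<p}. l i ^ ((h - 1 - (h * i) div p) * k + (k - 1 - (k * ((h * i) mod p)) div p)))"
    unfolding prod_power_mult_prod_power
    using exponent_identity[of _ p h k] assms \<open>0 < r\<close>
    by (intro prod.cong refl arg_cong[where f = "power _"]) (simp add: q_def r_def mult.commute add.commute)
  also have "\<dots> = b_prod h \<gamma> ^ k * b_prod k (of_nat h * \<gamma>)"
    unfolding prod_power_mult_prod_power[symmetric]
    using assms by (simp add: b_prod_eq_prod prod_power_reindex_mult l_def p_def)
  finally show ?thesis
    by (simp add: q_def r_def mult.commute)
qed

lemma prod_power_one_minus_div_neq_0:
  fixes \<gamma> :: "'a::field_prime_char"
  assumes "\<And>n. \<gamma> \<noteq> of_nat n"
  shows "(\<Prod>i\<in>{0<..<CHAR('a)}. (1 - \<gamma> / of_nat i) ^ e i) \<noteq> 0"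
proof -
  have nz: "1 - \<gamma> / of_nat i \<noteq> 0" if "i \<in> {0<..<CHAR('a)}" for i
    using assms[of i] that of_nat_neq_0_below_CHAR[of i, where 'a='a] by auto
  have "(1 - \<gamma> / of_nat i) ^ e i \<noteq> 0" if "i \<in> {0<..<CHAR('a)}" for i
    using nz[OF that] by (rule power_not_zero)
  then show ?thesis
    by (simp only: prod_zero_iff[OF finite_greaterThanLessThan]) blast
qed

lemma b_prod_neq_0:
  fixes \<gamma> :: "'a::field_prime_char"
  assumes "\<And>n. \<gamma> \<noteq> of_nat n" "0 < h" "h < CHAR('a)" "k < CHAR('a)"
  shows "b_prod k (of_nat h * \<gamma>) \<noteq> 0"
  unfolding b_prod_eq_prod[OF assms(4)] prod_power_reindex_mult[OF assms(2,3)]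
  by (rule prod_power_one_minus_div_neq_0[OF assms(1)])

lemma laguerre_field_neq_0:
  fixes \<gamma> :: "'a::field_prime_char"
  assumes "\<And>n. \<gamma> \<noteq> of_nat n" "odd CHAR('a)"
  shows "laguerre_field (\<gamma> ^ CHAR('a)) (\<gamma> ^ CHAR('a) - \<gamma>) \<noteq> 0"
  unfolding laguerre_field_eq_prod[OF assms(2)] by (rule prod_power_one_minus_div_neq_0[OF assms(1)])

section \<open>The congruence\<close>

definition G_field :: "'a::field \<Rightarrow> 'a poly" where
  "G_field \<gamma> = - (\<Sum>k\<in>{0<..<CHAR('a)}. monom (1 / (of_nat k * b_prod k \<gamma>)) k)"

lemma G_poly_eq_G_field: "G_poly \<gamma> = G_field \<gamma>" for \<gamma> :: "'p::prime_card ratfun"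
proof -
  have "{1..CARD('p) - 1} = {0<..<CARD('p)}"
    by auto
  then show ?thesis
    by (simp add: G_poly_def G_field_def b_prod_def b_rs_eq_b_field)
qed

lemma pcompose_G_field_monom:
  "pcompose (G_field \<gamma>) (monom d h)
     = - (\<Sum>k\<in>{0<..<CHAR('a)}. monom (d ^ k / (of_nat k * b_prod k \<gamma>)) (h * k))"
  for \<gamma> :: "'a::field"
  by (simp add: G_field_def pcompose_sum pcompose_uminus pcompose_monom_left monom_power smult_monom
      mult.commute)

lemma smult_G_field_reindex:
  fixes \<gamma> :: "'a::field_prime_char"
  assumes "0 < h" "h < CHAR('a)"
  defines "\<sigma> \<equiv> \<lambda>k. (h * k) mod CHAR('a)"
  shows "smult (of_nat h) (G_field \<gamma>)
           = - (\<Sum>k\<in>{0<..<CHAR('a)}. monom (of_nat h / (of_nat (\<sigma> k) * b_prod (\<sigma> k) \<gamma>)) (\<sigma> k))"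
proof -
  have "smult (of_nat h) (G_field \<gamma>)
      = - (\<Sum>k\<in>{0<..<CHAR('a)}. monom (of_nat h / (of_nat k * b_prod k \<gamma>)) k)"
    by (simp add: G_field_def smult_sum_right smult_monom)
  also have "(\<Sum>k\<in>{0<..<CHAR('a)}. monom (of_nat h / (of_nat k * b_prod k \<gamma>)) k)
      = (\<Sum>k\<in>{0<..<CHAR('a)}. monom (of_nat h / (of_nat (\<sigma> k) * b_prod (\<sigma> k) \<gamma>)) (\<sigma> k))"
    unfolding \<sigma>_def using assms by (intro sum.reindex_bij_betw[symmetric] bij_betw_mult_mod_prime) simp_all
  finally show ?thesis .
qed

lemma G_field_coefficient_identity:
  fixes \<gamma> :: "'a::field_prime_char"
  assumes "odd CHAR('a)" "0 < h" "h < CHAR('a)" "0 < k" "k < CHAR('a)" "\<And>n. \<gamma> \<noteq> of_nat n"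
  defines "p \<equiv> CHAR('a)"
  defines "q \<equiv> (h * k) div p" and "r \<equiv> (h * k) mod p"
  shows "(1 / b_prod h \<gamma>) ^ k / (of_nat k * b_prod k (of_nat h * \<gamma>))
           * laguerre_field (\<gamma> ^ p) (\<gamma> ^ p - \<gamma>) ^ q
         = of_nat h / (of_nat r * b_prod r \<gamma>)"
proof -
  define L where "L = laguerre_field (\<gamma> ^ p) (\<gamma> ^ p - \<gamma>)"
  have "0 < r" "r < p"
    using assms by (simp_all add: r_def p_def mult_mod_prime_pos)
  have nz: "b_prod r \<gamma> \<noteq> 0" "b_prod k (of_nat h * \<gamma>) \<noteq> 0" "b_prod h \<gamma> \<noteq> 0"
    "(of_nat k :: 'a) \<noteq> 0" "(of_nat h :: 'a) \<noteq> 0" "L \<noteq> 0"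
    using b_prod_neq_0[OF assms(6), of 1 r] b_prod_neq_0[OF assms(6), of h k]
      b_prod_neq_0[OF assms(6), of 1 h] laguerre_field_neq_0[OF assms(6,1)] assms \<open>r < p\<close>
    by (simp_all add: of_nat_neq_0_below_CHAR L_def p_def)
  have "(of_nat r :: 'a) = of_nat h * of_nat k"
    by (simp add: r_def p_def)
  moreover have "L ^ q * b_prod r \<gamma> = b_prod k (of_nat h * \<gamma>) * b_prod h \<gamma> ^ k"
    using laguerre_power_mult_b_prod[OF assms(1-5)] by (simp add: L_def q_def r_def p_def)
  ultimately show ?thesis
    using nz unfolding L_def[symmetric] by (simp add: field_simps power_one_over)
qed

lemma pcompose_G_field_monom_mod:
  fixes \<gamma> :: "'a::field_prime_char"
  assumes "odd CHAR('a)" "0 < h" "h < CHAR('a)" "\<And>n. \<gamma> \<noteq> of_nat n"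
  defines "p \<equiv> CHAR('a)"
  defines "M \<equiv> monom 1 p - [:laguerre_field (\<gamma> ^ p) (\<gamma> ^ p - \<gamma>):]"
  shows "pcompose (G_field (of_nat h * \<gamma>)) (monom (1 / b_prod h \<gamma>) h) mod M
           = smult (of_nat h) (G_field \<gamma>) mod M"
proof -
  define \<sigma> where "\<sigma> k = (h * k) mod p" for k
  define A where "A k = (1 / b_prod h \<gamma>) ^ k / (of_nat k * b_prod k (of_nat h * \<gamma>))" for k
  define B where "B k = of_nat h / (of_nat (\<sigma> k) * b_prod (\<sigma> k) \<gamma>)" for k
  have key: "M dvd monom (B k) (\<sigma> k) - monom (A k) (h * k)" if "k \<in> {0<..<p}" for k
  proof -
    have "h * k = \<sigma> k + p * ((h * k) div p)"
      by (simp add: \<sigma>_def)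
    moreover have "A k * laguerre_field (\<gamma> ^ p) (\<gamma> ^ p - \<gamma>) ^ ((h * k) div p) = B k"
      using G_field_coefficient_identity[OF assms(1-3) _ _ assms(4), of k] that
      by (simp add: A_def B_def \<sigma>_def p_def)
    ultimately show ?thesis
      unfolding M_def by (metis monom_minus_const_dvd dvd_diff_commute)
  qed
  have "pcompose (G_field (of_nat h * \<gamma>)) (monom (1 / b_prod h \<gamma>) h)
      = - (\<Sum>k\<in>{0<..<p}. monom (A k) (h * k))"
    unfolding pcompose_G_field_monom A_def p_def ..
  moreover have "smult (of_nat h) (G_field \<gamma>) = - (\<Sum>k\<in>{0<..<p}. monom (B k) (\<sigma> k))"
    unfolding smult_G_field_reindex[OF assms(2,3)] B_def \<sigma>_def p_def ..
  ultimately have "pcompose (G_field (of_nat h * \<gamma>)) (monom (1 / b_prod h \<gamma>) h)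
      - smult (of_nat h) (G_field \<gamma>) = (\<Sum>k\<in>{0<..<p}. monom (B k) (\<sigma> k) - monom (A k) (h * k))"
    by (simp add: sum_subtractf)
  moreover have "M dvd (\<Sum>k\<in>{0<..<p}. monom (B k) (\<sigma> k) - monom (A k) (h * k))"
    by (rule dvd_sum) (rule key)
  ultimately show ?thesis
    by (simp add: mod_eq_dvd_iff)
qed

lemma alpha_neq_of_nat: "alpha \<noteq> (of_nat n :: 'p::prime_card ratfun)"
  by (simp add: alpha_def of_nat_eq_to_fract of_nat_poly)

theorem theorem8:
  fixes h :: nat
  assumes "odd (CARD('p::prime_card))"
    and "0 < h" and "h < CARD('p)"
  shows "let p = CARD('p);
             \<alpha> = (alpha :: 'p ratfun);
             M = monom 1 p - [: laguerre (\<alpha> ^ p) (\<alpha> ^ p - \<alpha>) :];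
             Y = monom (1 / (\<Prod>s=1..h-1. b_rs 1 s \<alpha>)) h
         in pcompose (G_poly (of_nat h * \<alpha>)) Y mod M = (smult (of_nat h) (G_poly \<alpha>)) mod M"
proof -
  have "odd CHAR('p ratfun)" "h < CHAR('p ratfun)"
    using assms by simp_all
  from pcompose_G_field_monom_mod[OF this(1) assms(2) this(2) alpha_neq_of_nat] show ?thesis
    by (simp add: Let_def G_poly_eq_G_field laguerre_eq_laguerre_field b_rs_eq_b_field b_prod_def)
qed

end
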